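(* Let $\alpha>-1$. For $z\in\mathbb{C}\setminus[0,\infty)$, as $n\to\infty$, $$\frac{L_n^{(\alpha)}(z)}{L_n^{(\alpha+1)}(z)}=\sqrt{\frac{-z}{n}}+\left(\frac{\alpha}{2}+\frac14+\frac z2\right)\frac1n+\mathcal{O}(n^{-3/2}),$$ uniformly on compact subsets of $\mathbb{C}\setminus[0,\infty)$.
   Context: $L_n^{(\alpha)}(z)=\binom{n+\alpha}{n}\,{}_1F_1(-n;\alpha+1;z)$ is the classical Laguerre polynomial. $\sqrt{-z}$ is the principal branch on $\mathbb{C}\setminus[0,\infty)$. *)

theory Defs
  imports "HOL-Analysis.Analysis"
begin

definition hyp1F1_neg :: "nat \<Rightarrow> complex \<Rightarrow> complex \<Rightarrow> complex" where
  "hyp1F1_neg n b z =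
     (\<Sum>k\<le>n. pochhammer (- of_nat n) k / pochhammer b k * z ^ k / of_nat (fact k))"

definition laguerre :: "nat \<Rightarrow> real \<Rightarrow> complex \<Rightarrow> complex" where
  "laguerre n \<alpha> z =
     ((of_nat n + complex_of_real \<alpha>) gchoose n) * hyp1F1_neg n (complex_of_real \<alpha> + 1) z"

end

theory Submission
  imports Defs
begin

text \<open>Put \<open>\<beta> = \<alpha> + 1\<close>, \<open>p\<^sub>m = L\<^sub>m\<^sup>(\<^sup>\<beta>\<^sup>)(z)\<close>, \<open>s = \<surd>(-z)\<close> and \<open>h\<^sub>m = p\<^sub>m / p\<^sub>m\<^sub>-\<^sub>1\<close>. Since
  \<open>L\<^sub>n\<^sup>(\<^sup>\<alpha>\<^sup>) = L\<^sub>n\<^sup>(\<^sup>\<beta>\<^sup>) - L\<^sub>n\<^sub>-\<^sub>1\<^sup>(\<^sup>\<beta>\<^sup>)\<close>, the ratio in question is \<open>1 - 1/h\<^sub>n\<close>. The three-term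
  recurrence makes \<open>h\<^sub>m\<close> the image of \<open>h\<^sub>m\<^sub>-\<^sub>1\<close> under a Moebius map, which has two approximate fixed
  points \<open>a\<^sub>m, b\<^sub>m = 1 \<plusminus> s/\<surd>m + O(1/m)\<close>. By induction every \<open>h\<^sub>m\<close> lies in the half-plane
  \<open>Re (cnj s (h - 1)) > 0\<close>, hence at distance of order \<open>1/\<surd>m\<close> from \<open>b\<^sub>m\<close>, and each step multiplies the
  cross ratio \<open>(h - a)/(h - b)\<close> by \<open>b/a\<close>, of modulus at most \<open>1 - Re s/(4\<surd>m)\<close>, up to an error
  \<open>O(m\<^sup>-\<^sup>3\<^sup>/\<^sup>2)\<close>. So the cross ratio is \<open>O(1/m)\<close>, \<open>h\<^sub>n = a\<^sub>n + O(n\<^sup>-\<^sup>3\<^sup>/\<^sup>2)\<close>, and expanding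
  \<open>1 - 1/a\<^sub>n\<close> gives the claim. All constants depend only on a lower bound for \<open>Re s\<close> and an upper
  bound for \<open>|s|\<close>, which is what makes the estimate uniform on compact sets.\<close>

section \<open>Contiguous relations\<close>

text \<open>For a complex parameter \<open>a\<close>, \<open>laguerre_sum a n z\<close> is the Laguerre polynomial written as
  \<open>\<Sum>k\<le>n. binom(n+a, n-k) (-z)^k / k!\<close>; in this form the contiguous relations become
  coefficientwise identities between binomial coefficients.\<close>

definition laguerre_coeff :: "complex \<Rightarrow> nat \<Rightarrow> nat \<Rightarrow> complex" where
  "laguerre_coeff a n k = (if k \<le> n then ((of_nat n + a) gchoose (n - k)) / fact k else 0)"

definition laguerre_sum :: "complex \<Rightarrow> nat \<Rightarrow> complex \<Rightarrow> complex" where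
  "laguerre_sum a n z = (\<Sum>k\<le>n. laguerre_coeff a n k * (-z) ^ k)"

lemma laguerre_sum_atMost:
  assumes "n \<le> m"
  shows "laguerre_sum a n z = (\<Sum>k\<le>m. laguerre_coeff a n k * (-z) ^ k)"
  unfolding laguerre_sum_def
  by (rule sum.mono_neutral_left) (use assms in \<open>auto simp: laguerre_coeff_def\<close>)

lemma laguerre_eq_laguerre_sum:
  assumes "\<alpha> > -1"
  shows "laguerre n \<alpha> z = laguerre_sum (of_real \<alpha>) n z"
proof -
  let ?a = "complex_of_real \<alpha>"
  have poch_nz: "pochhammer (?a + 1) k \<noteq> 0" for k
  proof
    assume "pochhammer (?a + 1) k = 0"
    then obtain j where "?a + 1 = - of_nat j" by (auto simp: pochhammer_eq_0_iff)
    hence "\<alpha> + 1 = - real j"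
      by (metis of_real_1 of_real_add of_real_eq_iff of_real_minus of_real_of_nat_eq)
    thus False using assms by simp
  qed
  have "((of_nat n + ?a) gchoose n) *
          (pochhammer (- of_nat n) k / pochhammer (?a + 1) k * z ^ k / of_nat (fact k))
        = laguerre_coeff ?a n k * (-z) ^ k" if "k \<le> n" for k
  proof -
    have binom_n: "(of_nat n + ?a) gchoose n = pochhammer (?a + 1) n / fact n"
      by (simp add: gbinomial_pochhammer' add_ac)
    have binom_k: "(of_nat n + ?a) gchoose (n - k)
        = pochhammer (?a + 1 + of_nat k) (n - k) / fact (n - k)"
      using that by (simp add: gbinomial_pochhammer' of_nat_diff add_ac)
    have poch_split: "pochhammer (?a + 1) n
        = pochhammer (?a + 1) k * pochhammer (?a + 1 + of_nat k) (n - k)"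
      using pochhammer_product'[of "?a + 1" k "n - k"] that by simp
    have fact_split: "fact n = fact (n - k) * pochhammer (of_nat (n - k) + 1 :: complex) k"
      using pochhammer_product[of "n - k" n "1::complex"] that
      by (simp add: pochhammer_fact add_ac)
    have poch_neg: "pochhammer (- of_nat n :: complex) k = (-1) ^ k * fact n / fact (n - k)"
      using pochhammer_minus[of "of_nat n :: complex" k] that fact_split
      by (simp add: of_nat_diff)
    show ?thesis
      unfolding binom_n poch_neg poch_split laguerre_coeff_def if_P[OF that] binom_k
        power_minus[of z k]
      using poch_nz[of k] by (simp add: field_simps)
  qed
  thus ?thesis
    unfolding laguerre_def hyp1F1_neg_def laguerre_sum_def sum_distrib_left
    by (intro sum.cong) auto
qed

lemma laguerre_coeff_contiguous:
  "laguerre_coeff (a + 1) (Suc m) k - laguerre_coeff (a + 1) m k = laguerre_coeff a (Suc m) k"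
proof (cases "k \<le> m")
  case True
  define X where "X = of_nat m + (a + 1)"
  have sk: "Suc m - k = Suc (m - k)" using True by simp
  have "laguerre_coeff (a + 1) (Suc m) k = ((X + 1) gchoose Suc (m - k)) / fact k"
    "laguerre_coeff (a + 1) m k = (X gchoose (m - k)) / fact k"
    "laguerre_coeff a (Suc m) k = (X gchoose Suc (m - k)) / fact k"
    using True by (simp_all add: laguerre_coeff_def X_def sk add_ac)
  thus ?thesis by (simp add: gbinomial_Suc_Suc add_divide_distrib)
next
  case False
  thus ?thesis by (cases "k = Suc m") (simp_all add: laguerre_coeff_def)
qed

lemma laguerre_sum_contiguous:
  "laguerre_sum (a + 1) (Suc m) z - laguerre_sum (a + 1) m z = laguerre_sum a (Suc m) z"
proof -
  have "laguerre_sum (a + 1) m z = (\<Sum>k\<le>Suc m. laguerre_coeff (a + 1) m k * (-z) ^ k)"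
    by (rule laguerre_sum_atMost) simp
  hence "laguerre_sum (a + 1) (Suc m) z - laguerre_sum (a + 1) m z
      = (\<Sum>k\<le>Suc m. (laguerre_coeff (a + 1) (Suc m) k - laguerre_coeff (a + 1) m k) * (-z) ^ k)"
    by (simp add: laguerre_sum_def sum_subtractf left_diff_distrib)
  thus ?thesis by (simp add: laguerre_coeff_contiguous laguerre_sum_def)
qed

lemma laguerre_coeff_rec:
  "of_nat (Suc m) * laguerre_coeff a (Suc m) (Suc j)
     = (of_nat (Suc m) + a) * laguerre_coeff a m (Suc j) + laguerre_coeff (a + 1) m j"
proof (cases "j < m")
  case True
  define i where "i = m - Suc j"
  define X where "X = of_nat m + (a + 1)"
  have sk: "Suc m - Suc j = Suc i" and sk2: "m - j = Suc i" using True by (simp_all add: i_def)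
  have X_eqs: "of_nat (Suc m) + a = X" "of_nat m + a = X - 1" by (simp_all add: X_def)
  have coeffs: "laguerre_coeff a (Suc m) (Suc j) = (X gchoose Suc i) / fact (Suc j)"
    "laguerre_coeff a m (Suc j) = ((X - 1) gchoose i) / fact (Suc j)"
    "laguerre_coeff (a + 1) m j = (X gchoose Suc i) / fact j"
    using True unfolding laguerre_coeff_def X_eqs sk sk2
    by (simp_all add: X_def i_def algebra_simps)
  have absorb: "of_nat (Suc i) * (X gchoose Suc i) = X * ((X - 1) gchoose i)"
    by (rule gbinomial_absorption)
  have m_split: "of_nat (Suc m) = of_nat (Suc i) + (of_nat (Suc j) :: complex)"
    using True by (simp add: i_def of_nat_diff)
  have "(of_nat (Suc i) + of_nat (Suc j)) * ((X gchoose Suc i) / (of_nat (Suc j) * fact j))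
      = X * ((X - 1) gchoose i) / (of_nat (Suc j) * fact j) + (X gchoose Suc i) / fact j"
    unfolding distrib_right add_divide_distrib absorb[symmetric]
    using of_nat_neq_0[of j, where ?'a=complex] by simp
  moreover have "fact (Suc j) = of_nat (Suc j) * (fact j :: complex)" by simp
  ultimately show ?thesis unfolding coeffs X_eqs(1)
    by (subst m_split) (simp only: times_divide_eq_right)
next
  case False
  thus ?thesis
    using fact_nonzero[of "Suc m", where ?'a=complex]
    by (cases "j = m") (simp_all add: laguerre_coeff_def field_simps del: fact_Suc,
        simp add: algebra_simps)
qed

lemma laguerre_sum_rec:
  "of_nat (Suc m) * laguerre_sum a (Suc m) z
     = (of_nat (Suc m) + a) * laguerre_sum a m z - z * laguerre_sum (a + 1) m z"
proof -
  define D where "D k = (case k of 0 \<Rightarrow> 0 | Suc j \<Rightarrow> laguerre_coeff (a + 1) m j)" for k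
  have "z * laguerre_sum (a + 1) m z = - (\<Sum>k\<le>m. laguerre_coeff (a + 1) m k * (-z) ^ Suc k)"
    by (simp add: laguerre_sum_def sum_distrib_left sum_negf algebra_simps)
  also have "(\<Sum>k\<le>m. laguerre_coeff (a + 1) m k * (-z) ^ Suc k) = (\<Sum>k\<le>Suc m. D k * (-z) ^ k)"
    by (subst sum.atMost_Suc_shift) (simp add: D_def)
  finally have shifted: "z * laguerre_sum (a + 1) m z = - (\<Sum>k\<le>Suc m. D k * (-z) ^ k)" .
  have extended: "laguerre_sum a m z = (\<Sum>k\<le>Suc m. laguerre_coeff a m k * (-z) ^ k)"
    by (rule laguerre_sum_atMost) simp
  have coeff_rec: "of_nat (Suc m) * laguerre_coeff a (Suc m) k
      = (of_nat (Suc m) + a) * laguerre_coeff a m k + D k" for k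
  proof (cases k)
    case 0
    have "of_nat (Suc m) * ((of_nat (Suc m) + a) gchoose Suc m)
        = (of_nat (Suc m) + a) * ((of_nat m + a) gchoose m)"
      using gbinomial_absorption[of m "of_nat (Suc m) + a"] by (simp add: algebra_simps)
    thus ?thesis using 0 by (simp add: laguerre_coeff_def D_def)
  next
    case (Suc j)
    thus ?thesis using laguerre_coeff_rec[of m a j] by (simp add: D_def)
  qed
  have "(of_nat (Suc m) + a) * laguerre_sum a m z - z * laguerre_sum (a + 1) m z
     = (\<Sum>k\<le>Suc m. ((of_nat (Suc m) + a) * laguerre_coeff a m k + D k) * (-z) ^ k)"
    unfolding shifted extended
    by (simp only: sum_distrib_left sum.distrib distrib_right diff_minus_eq_add mult.assoc)
  also have "\<dots> = of_nat (Suc m) * laguerre_sum a (Suc m) z"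
    unfolding laguerre_sum_def sum_distrib_left coeff_rec[symmetric] by (simp only: mult.assoc)
  finally show ?thesis by simp
qed

lemma laguerre_sum_three_term:
  "of_nat (Suc (Suc m)) * laguerre_sum b (Suc (Suc m)) z
     = (2 * of_nat m + 3 + b - z) * laguerre_sum b (Suc m) z
       - (of_nat m + 1 + b) * laguerre_sum b m z"
proof -
  have contig: "laguerre_sum b (Suc k) z - laguerre_sum b k z = laguerre_sum (b - 1) (Suc k) z" for k
    using laguerre_sum_contiguous[of "b - 1" k z] by simp
  have "of_nat (Suc (Suc m)) * laguerre_sum (b - 1) (Suc (Suc m)) z
     = (of_nat (Suc (Suc m)) + (b - 1)) * laguerre_sum (b - 1) (Suc m) z - z * laguerre_sum b (Suc m) z"
    using laguerre_sum_rec[of "Suc m" "b - 1" z] by simp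
  hence "of_nat (Suc (Suc m)) * (laguerre_sum b (Suc (Suc m)) z - laguerre_sum b (Suc m) z)
     = (of_nat (Suc (Suc m)) + (b - 1)) * (laguerre_sum b (Suc m) z - laguerre_sum b m z)
       - z * laguerre_sum b (Suc m) z"
    unfolding contig .
  thus ?thesis by (simp add: algebra_simps)
qed

lemma laguerre_sum_0 [simp]: "laguerre_sum b 0 z = 1"
  by (simp add: laguerre_sum_def laguerre_coeff_def)

lemma laguerre_sum_1: "laguerre_sum b 1 z = 1 + b - z"
  by (simp add: laguerre_sum_def laguerre_coeff_def)

section \<open>The half-plane invariant\<close>

lemma Re_cnj_mult_div_one_plus_pos:
  fixes s g :: complex
  assumes "Re (cnj s * g) > 0" "Re s > 0"
  shows "1 + g \<noteq> 0" "Re (cnj s * (g / (1 + g))) > 0"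
proof -
  show nz: "1 + g \<noteq> 0"
    using assms by (auto simp: add_eq_0_iff)
  have "cnj s * (g * cnj (1 + g)) = cnj s * g + cnj s * (g * cnj g)"
    by (simp add: algebra_simps)
  hence "Re (cnj s * (g * cnj (1 + g))) = Re (cnj s * g) + Re s * (cmod g)\<^sup>2"
    unfolding complex_norm_square[symmetric] by simp
  also have "\<dots> > 0" using assms by (simp add: add_pos_nonneg)
  finally have pos: "Re (cnj s * (g * cnj (1 + g))) > 0" .
  have "g / (1 + g) = (g * cnj (1 + g)) / ((1 + g) * cnj (1 + g))"
    using nz by (metis complex_cnj_zero_iff mult_divide_mult_cancel_right)
  hence "g / (1 + g) = (g * cnj (1 + g)) / of_real ((cmod (1 + g))\<^sup>2)"
    unfolding complex_norm_square .
  hence "Re (cnj s * (g / (1 + g))) = Re (cnj s * (g * cnj (1 + g))) / (cmod (1 + g))\<^sup>2"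
    by (simp add: Re_divide_of_real)
  thus "Re (cnj s * (g / (1 + g))) > 0" using pos nz by simp
qed

text \<open>With \<open>s\<^sup>2 = -z\<close> and \<open>Re s > 0\<close>, the increments \<open>g\<^sub>m = p\<^sub>m\<^sub>+\<^sub>1 / p\<^sub>m - 1\<close> of consecutive
  ratios satisfy \<open>(m + 2) g\<^sub>m\<^sub>+\<^sub>1 = (m + 1 + \<beta>) g\<^sub>m / (1 + g\<^sub>m) + s\<^sup>2\<close>, and both summands lie in the
  half-plane \<open>Re (cnj s * _) > 0\<close>, since \<open>cnj s * s\<^sup>2 = |s|\<^sup>2 s\<close>.\<close>

lemma laguerre_sum_ratio_half_plane:
  fixes s z :: complex and \<beta> :: real
  assumes s: "Re s > 0" "s\<^sup>2 = - z" and \<beta>: "\<beta> > 0"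
  defines "p \<equiv> \<lambda>m. laguerre_sum (of_real \<beta>) m z"
  shows "p n \<noteq> 0 \<and> p (Suc n) \<noteq> 0 \<and> Re (cnj s * (p (Suc n) / p n - 1)) > 0"
proof (induction n)
  case 0
  have "cnj s * (of_real \<beta> + s\<^sup>2) = of_real \<beta> * cnj s + (s * cnj s) * s"
    by (simp add: algebra_simps power2_eq_square)
  hence "Re (cnj s * (of_real \<beta> + s\<^sup>2)) = \<beta> * Re s + Re s * (cmod s)\<^sup>2"
    unfolding complex_norm_square[symmetric] by simp
  also have "\<dots> > 0" using s \<beta> by (simp add: add_pos_nonneg)
  finally have pos: "Re (cnj s * (of_real \<beta> + s\<^sup>2)) > 0" .
  have p1: "p (Suc 0) = 1 + (of_real \<beta> + s\<^sup>2)"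
    using laguerre_sum_1[of "of_real \<beta>" z] s by (simp add: p_def)
  have "p (Suc 0) \<noteq> 0"
    unfolding p1 using pos Re_cnj_mult_div_one_plus_pos(1) s(1) by blast
  thus ?case using pos p1 by (simp add: p_def)
next
  case (Suc m)
  define g where "g = p (Suc m) / p m - 1"
  have p0: "p m \<noteq> 0" and p1: "p (Suc m) \<noteq> 0" and g: "Re (cnj s * g) > 0"
    using Suc.IH by (simp_all add: g_def)
  define B where "B = real m + 1 + \<beta>"
  have B: "B > 0" using \<beta> by (simp add: B_def)
  have "of_nat (Suc (Suc m)) * p (Suc (Suc m))
      = (2 * of_nat m + 3 + of_real \<beta> - z) * p (Suc m) - (of_nat m + 1 + of_real \<beta>) * p m"
    unfolding p_def by (rule laguerre_sum_three_term)
  hence three_term: "of_nat (Suc (Suc m)) * (p (Suc (Suc m)) - p (Suc m))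
      = of_real B * (p (Suc m) - p m) - z * p (Suc m)"
    by (simp add: B_def algebra_simps)
  have ratio: "g / (1 + g) = (p (Suc m) - p m) / p (Suc m)"
    using p0 p1 by (simp add: g_def field_simps)
  have "(of_real B * (g / (1 + g)) + s\<^sup>2) / of_nat (Suc (Suc m))
      = (of_real B * (p (Suc m) - p m) - z * p (Suc m)) / (of_nat (Suc (Suc m)) * p (Suc m))"
    unfolding ratio using p1 s(2) by (simp add: field_simps del: of_nat_Suc)
  also have "\<dots> = p (Suc (Suc m)) / p (Suc m) - 1"
    unfolding three_term[symmetric] using p1 by (simp add: field_simps del: of_nat_Suc)
  finally have next_ratio: "p (Suc (Suc m)) / p (Suc m) - 1
      = (of_real B * (g / (1 + g)) + s\<^sup>2) / of_nat (Suc (Suc m))" ..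
  define q where "q = cnj s * (g / (1 + g))"
  have q: "Re q > 0" unfolding q_def by (rule Re_cnj_mult_div_one_plus_pos(2)[OF g s(1)])
  have "cnj s * (p (Suc (Suc m)) / p (Suc m) - 1)
      = (of_real B * q + (s * cnj s) * s) / of_nat (Suc (Suc m))"
    unfolding next_ratio q_def by (simp add: algebra_simps power2_eq_square del: of_nat_Suc)
  hence "Re (cnj s * (p (Suc (Suc m)) / p (Suc m) - 1))
      = (B * Re q + Re s * (cmod s)\<^sup>2) / real (Suc (Suc m))"
    unfolding complex_norm_square[symmetric] by (simp add: mult.commute del: of_nat_Suc)
  also have "\<dots> > 0" using B q s by (intro divide_pos_pos add_pos_nonneg mult_pos_pos) auto
  finally have pos: "Re (cnj s * (p (Suc (Suc m)) / p (Suc m) - 1)) > 0" .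
  hence "p (Suc (Suc m)) \<noteq> 0" using s(1) by auto
  thus ?case using p1 pos by simp
qed

section \<open>Approximate fixed points of the ratio map\<close>

lemma reciprocal_square_gap_bounds:
  fixes x y :: real
  assumes x: "0 < x" and y: "0 < y" and rel: "y\<^sup>2 - x\<^sup>2 = x\<^sup>2 * y\<^sup>2" and xs: "x\<^sup>2 \<le> 1/2"
  shows "x \<le> y" "y\<^sup>2 \<le> 2 * x\<^sup>2" "y - x \<le> x^3" "\<bar>x^3/2 - (y - x)\<bar> \<le> x^5"
proof -
  have "x\<^sup>2 * y\<^sup>2 \<ge> 0" by simp
  hence "x\<^sup>2 \<le> y\<^sup>2" using rel by linarith
  thus xy: "x \<le> y" using power2_le_imp_le[of x y] y by simp
  have "y\<^sup>2 * (1 - x\<^sup>2) = x\<^sup>2" using rel by (simp add: algebra_simps)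
  moreover have "y\<^sup>2 * (1 - x\<^sup>2) \<ge> y\<^sup>2 * (1/2)" using xs by (intro mult_left_mono) auto
  ultimately show y2: "y\<^sup>2 \<le> 2 * x\<^sup>2" by simp
  define d where "d = y - x"
  have dxy: "d * (x + y) = x\<^sup>2 * y\<^sup>2" using rel by (simp add: d_def power2_eq_square algebra_simps)
  have d0: "d \<ge> 0" using xy by (simp add: d_def)
  have "d * (2 * x) \<le> d * (x + y)" using d0 xy by (intro mult_left_mono) auto
  also have "\<dots> = x\<^sup>2 * y\<^sup>2" by (rule dxy)
  also have "\<dots> \<le> x\<^sup>2 * (2 * x\<^sup>2)" using y2 by (intro mult_left_mono) auto
  finally have "d * (2 * x) \<le> x^3 * (2 * x)" by (simp add: power2_eq_square power3_eq_cube algebra_simps)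
  hence dx3: "d \<le> x^3" using x by simp
  thus "y - x \<le> x^3" by (simp add: d_def)
  have eq: "(d - x^3/2) * (2 * (x + y)) = x\<^sup>2 * d * (2 * y + x)"
  proof -
    have "(d - x^3/2) * (2 * (x + y)) = 2 * (d * (x + y)) - x^3 * (x + y)" by (simp add: algebra_simps)
    also have "\<dots> = 2 * x\<^sup>2 * y\<^sup>2 - x^3 * (x + y)" by (simp add: dxy)
    also have "\<dots> = x\<^sup>2 * d * (2 * y + x)" by (simp add: d_def power2_eq_square power3_eq_cube algebra_simps)
    finally show ?thesis .
  qed
  have "\<bar>d - x^3/2\<bar> * (2 * (x + y)) = \<bar>(d - x^3/2) * (2 * (x + y))\<bar>"
    using x y by (simp add: abs_mult)
  also have "\<dots> = \<bar>x\<^sup>2 * d * (2 * y + x)\<bar>" by (simp only: eq)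
  also have "\<dots> = x\<^sup>2 * d * (2 * y + x)" using x y d0 by simp
  also have "\<dots> \<le> x\<^sup>2 * d * (2 * (x + y))" using x y d0 by (intro mult_left_mono) auto
  finally have "\<bar>d - x^3/2\<bar> \<le> x\<^sup>2 * d" using x y by simp
  also have "\<dots> \<le> x\<^sup>2 * x^3" using dx3 by (intro mult_left_mono) auto
  finally show "\<bar>x^3/2 - (y - x)\<bar> \<le> x^5" by (simp add: d_def abs_minus_commute power_add[symmetric])
qed

text \<open>With \<open>s\<^sup>2 = -z\<close>, the three-term recurrence says that the ratios \<open>h\<^sub>m = p\<^sub>m / p\<^sub>m\<^sub>-\<^sub>1\<close> satisfy
  \<open>h\<^sub>m = ratio_map s \<beta> m h\<^sub>m\<^sub>-\<^sub>1\<close>. Substituting \<open>h = 1 + s t + c t\<^sup>2\<close> with \<open>t = 1/\<surd>m\<close> and matching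
  the coefficients of \<open>t\<^sup>2\<close> and \<open>t\<^sup>3\<close> gives the value of \<open>c = root_coeff s \<beta>\<close>; the two choices \<open>\<pm>s\<close>
  give two approximate solutions, exact up to \<open>O(t\<^sup>4)\<close>.\<close>

definition root_coeff :: "complex \<Rightarrow> real \<Rightarrow> complex" where
  "root_coeff s \<beta> = (s\<^sup>2 + of_real \<beta> - 1/2) / 2"

definition approx_root :: "complex \<Rightarrow> real \<Rightarrow> real \<Rightarrow> complex" where
  "approx_root s \<beta> t = 1 + s * of_real t + root_coeff s \<beta> * (of_real t)\<^sup>2"

definition ratio_map :: "complex \<Rightarrow> real \<Rightarrow> nat \<Rightarrow> complex \<Rightarrow> complex" where
  "ratio_map s \<beta> n h
     = (2 * of_nat n - 1 + of_real \<beta> + s\<^sup>2 - (of_nat n - 1 + of_real \<beta>) / h) / of_nat n"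

lemma root_coeff_uminus [simp]: "root_coeff (-s) \<beta> = root_coeff s \<beta>"
  by (simp add: root_coeff_def)

lemma ratio_map_uminus [simp]: "ratio_map (-s) \<beta> m h = ratio_map s \<beta> m h"
  by (simp add: ratio_map_def)

definition root_coeff_bound :: "real \<Rightarrow> real \<Rightarrow> real" where
  "root_coeff_bound S \<beta> = (S\<^sup>2 + \<beta> + 1) / 2"

definition shift_bound :: "real \<Rightarrow> real \<Rightarrow> real" where
  "shift_bound S \<beta> = root_coeff_bound S \<beta> + \<beta> + S\<^sup>2 + 1"

definition defect_bound :: "real \<Rightarrow> real \<Rightarrow> real" where
  "defect_bound S \<beta> = 2 * (\<bar>1/2 - \<beta>\<bar> + root_coeff_bound S \<beta> + S
     + S * (2 * root_coeff_bound S \<beta> + shift_bound S \<beta>) + S * root_coeff_bound S \<beta>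
     + 2 * shift_bound S \<beta> * root_coeff_bound S \<beta>)"

lemma root_coeff_bound_pos: "\<beta> > 0 \<Longrightarrow> root_coeff_bound S \<beta> > 0"
  by (simp add: root_coeff_bound_def add_nonneg_pos)

lemma shift_bound_pos: "\<beta> > 0 \<Longrightarrow> shift_bound S \<beta> > 0"
  using root_coeff_bound_pos[of \<beta> S] by (simp add: shift_bound_def add_nonneg_pos)

lemma defect_bound_pos:
  assumes "\<beta> > 0" "S \<ge> 0"
  shows "defect_bound S \<beta> > 0"
  using root_coeff_bound_pos[of \<beta> S] shift_bound_pos[of \<beta> S] assms
  unfolding defect_bound_def by (simp add: add_nonneg_pos)

lemma norm_root_coeff_le:
  assumes "cmod s \<le> S" "\<beta> > 0"
  shows "cmod (root_coeff s \<beta>) \<le> root_coeff_bound S \<beta>"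
proof -
  have "cmod (s\<^sup>2 + of_real \<beta> - 1/2) \<le> cmod (s\<^sup>2) + cmod (of_real \<beta>) + cmod (1/2 :: complex)"
    using norm_triangle_ineq4[of "s\<^sup>2 + of_real \<beta>" "1/2::complex"]
      norm_triangle_ineq[of "s\<^sup>2" "of_real \<beta>::complex"]
    by linarith
  also have "\<dots> \<le> S\<^sup>2 + \<beta> + 1"
    using assms power_mono[of "cmod s" S 2] by (simp add: norm_power)
  finally show ?thesis unfolding root_coeff_def root_coeff_bound_def by (simp add: norm_divide)
qed

lemma norm_root_coeff_shift_le:
  assumes "cmod s \<le> S" "\<beta> > 0"
  shows "cmod (root_coeff s \<beta> - of_real \<beta> - s\<^sup>2 + 1) \<le> shift_bound S \<beta>"
proof -
  have "cmod (root_coeff s \<beta> - of_real \<beta> - s\<^sup>2 + 1)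
      \<le> cmod (root_coeff s \<beta>) + cmod (of_real \<beta> :: complex) + cmod (s\<^sup>2) + 1"
    using norm_triangle_ineq[of "root_coeff s \<beta> - of_real \<beta> - s\<^sup>2" 1]
      norm_triangle_ineq4[of "root_coeff s \<beta> - of_real \<beta>" "s\<^sup>2"]
      norm_triangle_ineq4[of "root_coeff s \<beta>" "of_real \<beta>"] by simp
  also have "\<dots> \<le> root_coeff_bound S \<beta> + \<beta> + S\<^sup>2 + 1"
    using assms norm_root_coeff_le[OF assms] power_mono[of "cmod s" S 2]
    by (intro add_mono) (simp_all add: norm_power)
  finally show ?thesis by (simp add: shift_bound_def)
qed

lemma approx_root_defect_eq:
  fixes s :: complex and \<beta> x y :: real
  defines "c \<equiv> root_coeff s \<beta>"
  defines "q \<equiv> c - of_real \<beta> - s\<^sup>2 + 1"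
  defines "X \<equiv> complex_of_real x"
  defines "Y \<equiv> complex_of_real y"
  shows "approx_root s \<beta> x * approx_root s \<beta> y - (2 + (of_real \<beta> + s\<^sup>2 - 1) * X\<^sup>2) * approx_root s \<beta> y
           + 1 + (of_real \<beta> - 1) * X\<^sup>2
    = (1/2 - of_real \<beta>) * X * (Y - X) - c * (Y - X)\<^sup>2 + s * (X ^ 3 / 2 - (Y - X))
      + s * (2 * c + q) * X\<^sup>2 * (Y - X) + s * c * X * (Y - X)\<^sup>2 + q * c * X\<^sup>2 * Y\<^sup>2"
  unfolding approx_root_def q_def c_def root_coeff_def X_def Y_def
  by (simp add: field_simps power2_eq_square power3_eq_cube)

lemma approx_root_defect_le:
  fixes s :: complex and \<beta> S x y :: real
  assumes x: "0 < x" "x\<^sup>2 \<le> 1/2" and y: "0 < y" "y\<^sup>2 - x\<^sup>2 = x\<^sup>2 * y\<^sup>2"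
    and S: "cmod s \<le> S" and \<beta>: "\<beta> > 0"
  defines "X \<equiv> complex_of_real x"
  shows "cmod (approx_root s \<beta> x * approx_root s \<beta> y
                - (2 + (of_real \<beta> + s\<^sup>2 - 1) * X\<^sup>2) * approx_root s \<beta> y + 1 + (of_real \<beta> - 1) * X\<^sup>2)
           \<le> defect_bound S \<beta> / 2 * x ^ 4"
proof -
  note gap = reciprocal_square_gap_bounds[OF x(1) y x(2)]
  define d where "d = y - x"
  have d0: "0 \<le> d" and d3: "d \<le> x ^ 3" and d5: "\<bar>x ^ 3 / 2 - d\<bar> \<le> x ^ 5" and yy: "y\<^sup>2 \<le> 2 * x\<^sup>2"
    using gap by (auto simp: d_def)
  define c where "c = root_coeff s \<beta>"
  define q where "q = c - of_real \<beta> - s\<^sup>2 + 1"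
  define C where "C = root_coeff_bound S \<beta>"
  define Q where "Q = shift_bound S \<beta>"
  define Y where "Y = complex_of_real y"
  have cb: "cmod c \<le> C" unfolding c_def C_def by (rule norm_root_coeff_le[OF S \<beta>])
  have qb: "cmod q \<le> Q" unfolding q_def c_def Q_def by (rule norm_root_coeff_shift_le[OF S \<beta>])
  have cqb: "cmod (2 * c + q) \<le> 2 * C + Q"
    using norm_triangle_ineq[of "2 * c" q] cb qb by (simp add: norm_mult)
  have S0: "S \<ge> 0" using S norm_ge_zero[of s] by linarith
  have C0: "C \<ge> 0" and Q0: "Q \<ge> 0"
    using root_coeff_bound_pos[OF \<beta>] shift_bound_pos[OF \<beta>] by (auto simp: C_def Q_def less_imp_le)
  have YX: "Y - X = of_real d" by (simp add: d_def X_def Y_def)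
  have real_diff: "X ^ 3 / 2 - (Y - X) = of_real (x ^ 3 / 2 - d)" by (simp add: d_def X_def Y_def)
  have x1: "x \<le> 1"
    by (rule power2_le_imp_le) (use x in simp_all)
  have x_pow: "x ^ k \<le> x ^ j" if "j \<le> k" for j k using x x1 that by (simp add: power_decreasing)
  have t1: "cmod ((1/2 - of_real \<beta>) * X * (Y - X)) \<le> \<bar>1/2 - \<beta>\<bar> * x ^ 4"
  proof -
    have real: "(1/2 - of_real \<beta>) * X * (Y - X) = of_real ((1/2 - \<beta>) * x * d)"
      unfolding YX unfolding X_def by simp
    have "cmod ((1/2 - of_real \<beta>) * X * (Y - X)) = \<bar>1/2 - \<beta>\<bar> * (x * d)"
      unfolding real norm_of_real using x d0 by (simp add: abs_mult)
    also have "\<dots> \<le> \<bar>1/2 - \<beta>\<bar> * (x * x ^ 3)" using d3 x by (intro mult_left_mono) auto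
    finally show ?thesis by (simp add: power_numeral_reduce)
  qed
  have t2: "cmod (c * (Y - X)\<^sup>2) \<le> C * x ^ 4"
  proof -
    have "cmod (c * (Y - X)\<^sup>2) = cmod c * d\<^sup>2" unfolding YX by (simp add: norm_mult norm_power)
    also have "\<dots> \<le> C * (x ^ 3)\<^sup>2" using cb d0 d3 C0 by (intro mult_mono power_mono) auto
    also have "\<dots> \<le> C * x ^ 4"
      using C0 x_pow[of 4 6] by (intro mult_left_mono) (auto simp flip: power_mult)
    finally show ?thesis .
  qed
  have t3: "cmod (s * (X ^ 3 / 2 - (Y - X))) \<le> S * x ^ 4"
  proof -
    have "cmod (s * (X ^ 3 / 2 - (Y - X))) = cmod s * \<bar>x ^ 3 / 2 - d\<bar>"
      unfolding real_diff by (simp only: norm_mult norm_of_real)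
    also have "\<dots> \<le> S * x ^ 5" using S d5 S0 by (intro mult_mono) auto
    also have "\<dots> \<le> S * x ^ 4" using S0 x_pow[of 4 5] by (intro mult_left_mono) auto
    finally show ?thesis .
  qed
  have t4: "cmod (s * (2 * c + q) * X\<^sup>2 * (Y - X)) \<le> S * (2 * C + Q) * x ^ 4"
  proof -
    have "cmod (s * (2 * c + q) * X\<^sup>2 * (Y - X)) = cmod s * cmod (2 * c + q) * (x\<^sup>2 * d)"
      unfolding YX unfolding X_def using d0 by (simp add: norm_mult norm_power)
    also have "\<dots> \<le> S * (2 * C + Q) * (x\<^sup>2 * x ^ 3)"
      using S cqb d0 d3 x S0 C0 Q0 by (intro mult_mono) auto
    also have "\<dots> \<le> S * (2 * C + Q) * x ^ 4"
      using S0 C0 Q0 x_pow[of 4 5] by (intro mult_left_mono) (auto simp flip: power_add)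
    finally show ?thesis .
  qed
  have t5: "cmod (s * c * X * (Y - X)\<^sup>2) \<le> S * C * x ^ 4"
  proof -
    have "cmod (s * c * X * (Y - X)\<^sup>2) = cmod s * cmod c * (x * d\<^sup>2)"
      unfolding YX unfolding X_def using d0 x by (simp add: norm_mult norm_power)
    also have "\<dots> \<le> S * C * (x * (x ^ 3)\<^sup>2)"
      using S cb d0 d3 x S0 C0 by (intro mult_mono power_mono) auto
    also have "\<dots> \<le> S * C * x ^ 4"
      using S0 C0 x_pow[of 4 7] by (intro mult_left_mono) (auto simp flip: power_mult power_Suc)
    finally show ?thesis .
  qed
  have t6: "cmod (q * c * X\<^sup>2 * Y\<^sup>2) \<le> 2 * Q * C * x ^ 4"
  proof -
    have "cmod (q * c * X\<^sup>2 * Y\<^sup>2) = cmod q * cmod c * (x\<^sup>2 * y\<^sup>2)"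
      unfolding X_def Y_def by (simp add: norm_mult norm_power)
    also have "\<dots> \<le> Q * C * (x\<^sup>2 * (2 * x\<^sup>2))"
      using qb cb yy Q0 C0 by (intro mult_mono) auto
    finally show ?thesis by (simp add: mult_ac power_numeral_reduce)
  qed
  have "cmod ((1/2 - of_real \<beta>) * X * (Y - X) - c * (Y - X)\<^sup>2 + s * (X ^ 3 / 2 - (Y - X))
      + s * (2 * c + q) * X\<^sup>2 * (Y - X) + s * c * X * (Y - X)\<^sup>2 + q * c * X\<^sup>2 * Y\<^sup>2)
    \<le> \<bar>1/2 - \<beta>\<bar> * x ^ 4 + C * x ^ 4 + S * x ^ 4 + S * (2 * C + Q) * x ^ 4
      + S * C * x ^ 4 + 2 * Q * C * x ^ 4"
    using t1 t2 t3 t4 t5 t6 by (smt (verit) norm_triangle_ineq norm_triangle_ineq4)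
  thus ?thesis
    unfolding approx_root_defect_eq X_def Y_def c_def q_def
    by (simp add: defect_bound_def C_def Q_def algebra_simps)
qed

lemma ratio_map_approx_root:
  fixes s :: complex and \<beta> S :: real and n :: nat
  assumes n: "n \<ge> 2" and S: "cmod s \<le> S" and \<beta>: "\<beta> > 0"
  defines "x \<equiv> 1 / sqrt (real n)" and "y \<equiv> 1 / sqrt (real n - 1)"
  assumes large: "cmod (approx_root s \<beta> y) \<ge> 1/2"
  shows "cmod (ratio_map s \<beta> n (approx_root s \<beta> y) - approx_root s \<beta> x) \<le> defect_bound S \<beta> * x ^ 4"
proof -
  have n_pos: "real n > 0" "real n - 1 > 0" using n by auto
  have x0: "x > 0" and y0: "y > 0" using n_pos by (simp_all add: x_def y_def)
  have x2: "x\<^sup>2 = 1 / real n" and y2: "y\<^sup>2 = 1 / (real n - 1)"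
    using n_pos by (simp_all add: x_def y_def power_divide)
  have gap: "y\<^sup>2 - x\<^sup>2 = x\<^sup>2 * y\<^sup>2" unfolding x2 y2 using n_pos by (simp add: field_simps)
  have x_small: "x\<^sup>2 \<le> 1/2" unfolding x2 using n by (simp add: field_simps)
  define X where "X = complex_of_real x"
  define a where "a = approx_root s \<beta> y"
  define E where "E = approx_root s \<beta> x * a - (2 + (of_real \<beta> + s\<^sup>2 - 1) * X\<^sup>2) * a + 1 + (of_real \<beta> - 1) * X\<^sup>2"
  have a_nz: "a \<noteq> 0" using large by (auto simp: a_def)
  have X_nz: "X \<noteq> 0" using x0 by (simp add: X_def)
  have "real n = 1 / x\<^sup>2" using x2 n_pos by simp
  hence "complex_of_real (real n) = complex_of_real (1 / x\<^sup>2)" by simp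
  hence n_eq: "(of_nat n :: complex) = 1 / X\<^sup>2" by (simp add: X_def)
  have "ratio_map s \<beta> n a - approx_root s \<beta> x = - E / a"
    unfolding ratio_map_def n_eq E_def using X_nz a_nz by (simp add: field_simps)
  hence "cmod (ratio_map s \<beta> n a - approx_root s \<beta> x) = cmod E / cmod a"
    by (simp add: norm_divide)
  also have "\<dots> \<le> cmod E / (1/2)" using large a_nz by (intro divide_left_mono) (auto simp: a_def)
  also have "\<dots> \<le> defect_bound S \<beta> * x ^ 4"
    using approx_root_defect_le[OF x0 x_small y0 gap S \<beta>] by (simp add: E_def X_def a_def)
  finally show ?thesis by (simp add: a_def)
qed

lemma norm_approx_root_bounds:
  assumes t: "0 \<le> t" "t \<le> 1" and S: "cmod s \<le> S" and \<beta>: "\<beta> > 0"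
    and small: "(S + root_coeff_bound S \<beta>) * t \<le> 1/2"
  shows "1/2 \<le> cmod (approx_root s \<beta> t)" "cmod (approx_root s \<beta> t) \<le> 3/2"
proof -
  have "cmod (approx_root s \<beta> t - 1) \<le> cmod s * t + cmod (root_coeff s \<beta>) * t\<^sup>2"
    unfolding approx_root_def using norm_triangle_ineq[of "s * of_real t" "root_coeff s \<beta> * (of_real t)\<^sup>2"] t
    by (simp add: norm_mult norm_power)
  also have "\<dots> \<le> S * t + root_coeff_bound S \<beta> * t"
  proof (intro add_mono mult_mono)
    show "t\<^sup>2 \<le> t" using t by (simp add: power2_eq_square mult_left_le)
  qed (use t S norm_root_coeff_le[OF S \<beta>] less_imp_le[OF root_coeff_bound_pos[OF \<beta>]]
        order_trans[OF norm_ge_zero S] in auto)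
  also have "\<dots> \<le> 1/2" using small by (simp add: algebra_simps)
  finally have near: "cmod (approx_root s \<beta> t - 1) \<le> 1/2" .
  show "1/2 \<le> cmod (approx_root s \<beta> t)"
    using near norm_triangle_ineq3[of "approx_root s \<beta> t" 1] by simp
  show "cmod (approx_root s \<beta> t) \<le> 3/2"
    using near norm_triangle_ineq[of "approx_root s \<beta> t - 1" 1] by simp
qed

lemma Re_cnj_mult_le: "Re (cnj s * v) \<le> cmod s * cmod v"
  using complex_Re_le_cmod[of "cnj s * v"] by (simp add: norm_mult)

lemma norm_sub_approx_root_uminus_ge:
  assumes inv: "Re (cnj s * (h - 1)) > 0" and sig: "\<sigma> \<le> Re s" "\<sigma> > 0" and S: "cmod s \<le> S"
    and \<beta>: "\<beta> > 0" and t: "0 < t" and ct: "root_coeff_bound S \<beta> * t \<le> \<sigma> / 2"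
  shows "cmod (h - approx_root (-s) \<beta> t) \<ge> cmod s * t / 2"
proof -
  define c where "c = root_coeff s \<beta>"
  have cb: "cmod c \<le> root_coeff_bound S \<beta>" unfolding c_def by (rule norm_root_coeff_le[OF S \<beta>])
  have sRe: "Re s \<le> cmod s" by (rule complex_Re_le_cmod)
  have s0: "cmod s > 0" using sig sRe by linarith
  have v: "h - approx_root (-s) \<beta> t = (h - 1) + s * of_real t - c * of_real (t\<^sup>2)"
    by (simp add: approx_root_def c_def)
  have ss: "Re (cnj s * (s * of_real t)) = (cmod s)\<^sup>2 * t"
    unfolding cmod_power2 by (simp add: power2_eq_square algebra_simps)
  have cs: "Re (cnj s * (c * of_real (t\<^sup>2))) \<le> cmod s * (cmod s / 2) * t"
  proof -
    have "Re (cnj s * (c * of_real (t\<^sup>2))) \<le> cmod s * cmod (c * of_real (t\<^sup>2))" by (rule Re_cnj_mult_le)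
    also have "\<dots> = cmod s * (cmod c * t * t)" by (simp add: norm_mult power2_eq_square)
    also have "\<dots> \<le> cmod s * ((cmod s / 2) * t)"
    proof (intro mult_left_mono)
      have "cmod c * t \<le> root_coeff_bound S \<beta> * t" using cb t by (intro mult_right_mono) auto
      also have "\<dots> \<le> cmod s / 2" using ct sig sRe by linarith
      finally show "cmod c * t * t \<le> cmod s / 2 * t" using t by (intro mult_right_mono) auto
    qed simp
    finally show ?thesis by (simp add: mult_ac)
  qed
  have "Re (cnj s * (h - approx_root (-s) \<beta> t)) = Re (cnj s * (h - 1)) + (cmod s)\<^sup>2 * t - Re (cnj s * (c * of_real (t\<^sup>2)))"
    unfolding v ss[symmetric] by (simp add: algebra_simps)
  also have "\<dots> > cmod s * (cmod s * t / 2)" using inv cs by (simp add: power2_eq_square algebra_simps)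
  finally have "cmod s * (cmod s * t / 2) < cmod s * cmod (h - approx_root (-s) \<beta> t)"
    using Re_cnj_mult_le[of s "h - approx_root (-s) \<beta> t"] by linarith
  thus ?thesis using s0 by simp
qed

lemma norm_add_sq_sub_norm_diff_sq: "(cmod (p + q))\<^sup>2 - (cmod (p - q))\<^sup>2 = 4 * Re (cnj p * q)"
  unfolding cmod_power2 by (simp add: power2_eq_square algebra_simps)

lemma norm_approx_root_uminus_le:
  assumes t: "0 < t" "t \<le> 1" and S: "cmod s \<le> S" and \<beta>: "\<beta> > 0"
    and st: "(S + root_coeff_bound S \<beta>) * t \<le> 1/2" and ct: "root_coeff_bound S \<beta> * S * t\<^sup>2 \<le> \<sigma> / 2"
    and sig: "\<sigma> \<le> Re s" "0 < \<sigma>" "\<sigma> \<le> 1"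
  shows "cmod (approx_root (-s) \<beta> t) \<le> (1 - \<sigma> * t / 4) * cmod (approx_root s \<beta> t)"
proof -
  define c where "c = root_coeff s \<beta>"
  define p where "p = 1 + c * of_real (t\<^sup>2)"
  have cb: "cmod c \<le> root_coeff_bound S \<beta>" unfolding c_def by (rule norm_root_coeff_le[OF S \<beta>])
  have ea: "approx_root s \<beta> t = p + s * of_real t" by (simp add: approx_root_def p_def c_def)
  have eb: "approx_root (-s) \<beta> t = p - s * of_real t" by (simp add: approx_root_def p_def c_def)
  have "Re (cnj p * s) = Re s + t\<^sup>2 * Re (cnj c * s)" by (simp add: p_def algebra_simps)
  moreover have "Re (cnj c * s) \<ge> - (root_coeff_bound S \<beta> * S)"
  proof -
    have "- Re (cnj c * s) \<le> cmod (cnj c * s)" using abs_Re_le_cmod[of "cnj c * s"] by linarith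
    also have "\<dots> \<le> root_coeff_bound S \<beta> * S"
      using cb S root_coeff_bound_pos[OF \<beta>, of S] by (simp add: norm_mult mult_mono)
    finally show ?thesis by linarith
  qed
  ultimately have "Re (cnj p * s) \<ge> Re s - t\<^sup>2 * (root_coeff_bound S \<beta> * S)"
    using mult_left_mono[of "- (root_coeff_bound S \<beta> * S)" "Re (cnj c * s)" "t\<^sup>2"] by simp
  hence pRe: "Re (cnj p * s) \<ge> \<sigma> / 2" using ct sig by (simp add: mult_ac)
  have diff: "(cmod (approx_root s \<beta> t))\<^sup>2 - (cmod (approx_root (-s) \<beta> t))\<^sup>2 = 4 * t * Re (cnj p * s)"
    unfolding ea eb norm_add_sq_sub_norm_diff_sq by (simp add: algebra_simps)
  have "4 * t * Re (cnj p * s) \<ge> 4 * t * (\<sigma>/2)" using pRe t by (intro mult_left_mono) auto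
  moreover have "4 * t * (\<sigma>/2) = 2 * \<sigma> * t" by simp
  ultimately have d2: "(cmod (approx_root (-s) \<beta> t))\<^sup>2 \<le> (cmod (approx_root s \<beta> t))\<^sup>2 - 2 * \<sigma> * t"
    using diff by linarith
  have A: "cmod (approx_root s \<beta> t) \<le> 3/2" using norm_approx_root_bounds(2)[of t s S \<beta>] t S \<beta> st by auto
  have A2: "(cmod (approx_root s \<beta> t))\<^sup>2 \<le> 4"
  proof -
    have "(cmod (approx_root s \<beta> t))\<^sup>2 \<le> (3/2)\<^sup>2" by (rule power_mono[OF A norm_ge_zero])
    moreover have "(3/2::real)\<^sup>2 \<le> 4" by (simp add: power2_eq_square)
    ultimately show ?thesis by linarith
  qed
  have "(cmod (approx_root s \<beta> t))\<^sup>2 - 2 * \<sigma> * t \<le> (cmod (approx_root s \<beta> t))\<^sup>2 * (1 - \<sigma> * t / 4)\<^sup>2"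
  proof -
    define A where "A = (cmod (approx_root s \<beta> t))\<^sup>2"
    define u where "u = \<sigma> * t"
    have m: "A * (u / 2) \<le> 4 * (u / 2)" unfolding A_def u_def
      using A2 t sig by (intro mult_right_mono) auto
    have e: "A * (1 - u/4)\<^sup>2 = A - A * (u/2) + A * (u/4)\<^sup>2" by (simp add: power2_eq_square algebra_simps)
    have nn: "A * (u/4)\<^sup>2 \<ge> 0" by (simp add: A_def)
    have "A - 2 * u \<le> A * (1 - u/4)\<^sup>2" using m e nn by linarith
    thus ?thesis by (simp add: A_def u_def mult.assoc)
  qed
  hence "(cmod (approx_root (-s) \<beta> t))\<^sup>2 \<le> ((1 - \<sigma> * t / 4) * cmod (approx_root s \<beta> t))\<^sup>2"
    using d2 by (simp add: power_mult_distrib mult_ac)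
  moreover have "0 \<le> (1 - \<sigma> * t / 4) * cmod (approx_root s \<beta> t)"
  proof -
    have "\<sigma> * t \<le> 1 * 1" using sig t by (intro mult_mono) auto
    thus ?thesis by simp
  qed
  ultimately show ?thesis by (rule power2_le_imp_le)
qed

lemma contraction_step:
  fixes x t Y M L \<kappa> :: real
  assumes x: "0 < x" "x \<le> 1/2" and t: "0 \<le> t" "t * (1 - x\<^sup>2) \<le> M * x\<^sup>2"
    and k: "\<kappa> * x \<le> 1" "x \<le> \<kappa>/4" "L * x\<^sup>2 \<le> \<kappa>/4" "2 * L \<le> \<kappa> * M"
    and pos: "0 \<le> L" "0 \<le> M" "0 \<le> \<kappa>"
    and Y: "Y \<le> (1 - \<kappa> * x) * t * (1 + L * x^3) + L * x^3"
  shows "Y \<le> M * x\<^sup>2"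
proof -
  define K1 where "K1 = 1 - \<kappa> * x + L * x^3"
  have x3: "x^3 \<ge> 0" using x by simp
  have K1: "K1 \<ge> 0" using k x3 pos by (simp add: K1_def)
  have "(1 - \<kappa> * x) * t * (1 + L * x^3) = K1 * t - (\<kappa> * x) * (L * x^3) * t"
    by (simp add: K1_def algebra_simps)
  moreover have "(\<kappa> * x) * (L * x^3) * t \<ge> 0" using pos x t by simp
  ultimately have Yb: "Y \<le> K1 * t + L * x^3" using Y by linarith
  have x2: "1 - x\<^sup>2 > 0"
  proof -
    have "x\<^sup>2 \<le> (1/2)\<^sup>2" using x by (intro power_mono) auto
    thus ?thesis by (simp add: power2_eq_square)
  qed
  have "(1 - x\<^sup>2) * Y \<le> (1 - x\<^sup>2) * (K1 * t + L * x^3)" using Yb x2 by (intro mult_left_mono) auto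
  also have "\<dots> = K1 * (t * (1 - x\<^sup>2)) + (1 - x\<^sup>2) * L * x^3" by (simp add: algebra_simps)
  also have "\<dots> \<le> K1 * (M * x\<^sup>2) + (1 - x\<^sup>2) * L * x^3" using K1 t by (simp add: mult_left_mono)
  also have "\<dots> \<le> (1 - x\<^sup>2) * (M * x\<^sup>2)"
  proof -
    have eq: "K1 * (M * x\<^sup>2) + (1 - x\<^sup>2) * L * x^3 - (1 - x\<^sup>2) * (M * x\<^sup>2)
        = x^3 * (L + M * x + M * (L * x\<^sup>2) - \<kappa> * M) - L * x^5"
      by (simp add: K1_def algebra_simps eval_nat_numeral)
    have f1: "M * x \<le> M * (\<kappa>/4)" using pos k by (intro mult_left_mono) auto
    have f2: "M * (L * x\<^sup>2) \<le> M * (\<kappa>/4)" using pos k by (intro mult_left_mono) auto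
    have "L + M * x + M * (L * x\<^sup>2) - \<kappa> * M \<le> 0" using f1 f2 k by (simp add: algebra_simps)
    hence "x^3 * (L + M * x + M * (L * x\<^sup>2) - \<kappa> * M) \<le> 0" using x3 by (simp add: mult_nonneg_nonpos)
    moreover have "L * x^5 \<ge> 0" using pos x by simp
    ultimately show ?thesis using eq by linarith
  qed
  finally show ?thesis using x2 by simp
qed

lemma ratio_map_cross_ratio:
  assumes "h \<noteq> 0" "a \<noteq> 0" "b \<noteq> 0" "h \<noteq> b" "m > 0"
  shows "ratio_map s \<beta> m h - ratio_map s \<beta> m a
           = b / a * ((h - a) / (h - b)) * (ratio_map s \<beta> m h - ratio_map s \<beta> m b)"
  using assms unfolding ratio_map_def by (simp add: field_simps)

lemma norm_expansion_remainder_le: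
  fixes a c c' s :: complex and x C S :: real
  assumes x: "0 < x" "x \<le> 1" and a: "1/2 \<le> cmod a" and s: "cmod s \<le> S"
    and c: "cmod c \<le> C" and c': "cmod c' \<le> C + S\<^sup>2"
  defines "X \<equiv> complex_of_real x"
  shows "cmod ((- (c + c') * s * X ^ 3 - c * c' * X ^ 4) / a)
           \<le> 2 * ((2 * C + S\<^sup>2) * S + C * (C + S\<^sup>2)) * x ^ 3"
proof -
  have C0: "0 \<le> C" and S0: "0 \<le> S" using c s norm_ge_zero order_trans by blast+
  have ccb: "cmod (c + c') \<le> 2 * C + S\<^sup>2" using norm_triangle_ineq[of c c'] c c' by linarith
  have "cmod (- (c + c') * s * X ^ 3 - c * c' * X ^ 4)
      \<le> cmod (c + c') * cmod s * x ^ 3 + cmod c * cmod c' * x ^ 4"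
    using norm_triangle_ineq4[of "- (c + c') * s * X ^ 3" "c * c' * X ^ 4"] x
      norm_minus_cancel[of "c + c'"]
    by (simp add: norm_mult norm_power X_def)
  also have "\<dots> \<le> (2 * C + S\<^sup>2) * S * x ^ 3 + C * (C + S\<^sup>2) * x ^ 3"
  proof (intro add_mono)
    show "cmod (c + c') * cmod s * x ^ 3 \<le> (2 * C + S\<^sup>2) * S * x ^ 3"
      using ccb s C0 x by (intro mult_mono mult_right_mono) auto
    have "cmod c * cmod c' * x ^ 4 \<le> C * (C + S\<^sup>2) * x ^ 4"
      using c c' C0 x by (intro mult_mono mult_right_mono) auto
    also have "\<dots> \<le> C * (C + S\<^sup>2) * x ^ 3"
      using x C0 by (intro mult_left_mono power_decreasing) auto
    finally show "cmod c * cmod c' * x ^ 4 \<le> C * (C + S\<^sup>2) * x ^ 3" .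
  qed
  finally have "cmod ((- (c + c') * s * X ^ 3 - c * c' * X ^ 4) / a)
      \<le> ((2 * C + S\<^sup>2) * S * x ^ 3 + C * (C + S\<^sup>2) * x ^ 3) / (1/2)"
    unfolding norm_divide using a x C0 S0 by (intro frac_le) auto
  thus ?thesis by (simp add: algebra_simps)
qed

lemma one_minus_inverse_eq:
  fixes h a s c c' X :: complex
  assumes "h \<noteq> 0" "a \<noteq> 0" "a = 1 + s * X + c * X\<^sup>2" "c' = c - s\<^sup>2"
  shows "1 - 1 / h - s * X - c' * X\<^sup>2
           = (h - a) / (a * h) + (- (c + c') * s * X ^ 3 - c * c' * X ^ 4) / a"
proof -
  have split: "1 - 1 / h - T = (h - a) / (a * h) + ((a - 1) - T * a) / a" for T
    using assms(1,2) by (simp add: field_simps)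
  have "(a - 1) - (s * X + c' * X\<^sup>2) * a = - (c + c') * s * X ^ 3 - c * c' * X ^ 4"
    unfolding assms(3,4) by (simp add: algebra_simps eval_nat_numeral)
  hence "1 - 1 / h - (s * X + c' * X\<^sup>2)
      = (h - a) / (a * h) + (- (c + c') * s * X ^ 3 - c * c' * X ^ 4) / a"
    using split[of "s * X + c' * X\<^sup>2"] by simp
  thus ?thesis by (simp add: algebra_simps)
qed

section \<open>Contraction of the cross ratio\<close>

definition scale_threshold :: "real \<Rightarrow> real \<Rightarrow> real \<Rightarrow> real" where
  "scale_threshold \<sigma> S \<beta> = Min {1/2, 1 / (2 * (S + root_coeff_bound S \<beta>)),
     \<sigma> / (2 * root_coeff_bound S \<beta>), \<sigma> / (2 * (root_coeff_bound S \<beta> * S)), \<sigma> / 16,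
     \<sigma>\<^sup>2 / (32 * defect_bound S \<beta>), 1 / (8 * S)}"

definition start_index :: "real \<Rightarrow> real \<Rightarrow> real \<Rightarrow> nat" where
  "start_index \<sigma> S \<beta> = nat \<lceil>1 / (scale_threshold \<sigma> S \<beta>)\<^sup>2\<rceil> + 4"

definition cross_ratio_const :: "real \<Rightarrow> real \<Rightarrow> real \<Rightarrow> real" where
  "cross_ratio_const \<sigma> S \<beta> = max (5 * real (start_index \<sigma> S \<beta>)) (16 * defect_bound S \<beta> / \<sigma>\<^sup>2)"

definition final_index :: "real \<Rightarrow> real \<Rightarrow> real \<Rightarrow> nat" where
  "final_index \<sigma> S \<beta> = start_index \<sigma> S \<beta> + nat \<lceil>2 * cross_ratio_const \<sigma> S \<beta>\<rceil> + 1"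

definition final_const :: "real \<Rightarrow> real \<Rightarrow> real \<Rightarrow> real" where
  "final_const \<sigma> S \<beta> = 32 * cross_ratio_const \<sigma> S \<beta> * S
     + 2 * ((2 * root_coeff_bound S \<beta> + S\<^sup>2) * S + root_coeff_bound S \<beta> * (root_coeff_bound S \<beta> + S\<^sup>2))"

lemma scale_threshold_pos:
  assumes "\<beta> > 0" "\<sigma> > 0" "S \<ge> 1"
  shows "scale_threshold \<sigma> S \<beta> > 0"
  using assms root_coeff_bound_pos[of \<beta> S] defect_bound_pos[of \<beta> S]
  unfolding scale_threshold_def by (simp add: add_pos_pos)

lemma scale_threshold_conditions:
  assumes \<beta>: "\<beta> > 0" and \<sigma>: "0 < \<sigma>" "\<sigma> \<le> 1" and S: "S \<ge> 1"
    and x: "0 < x" "x \<le> scale_threshold \<sigma> S \<beta>"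
  defines "C \<equiv> root_coeff_bound S \<beta>" and "L \<equiv> 2 * defect_bound S \<beta> / \<sigma>"
  shows "x \<le> 1/2" "(S + C) * x \<le> 1/2" "C * x \<le> \<sigma> / 2" "C * S * x\<^sup>2 \<le> \<sigma> / 2"
    "x \<le> \<sigma> / 16" "L * x\<^sup>2 \<le> \<sigma> / 16" "x \<le> 1 / (8 * S)" "\<sigma> / 4 * x \<le> 1"
proof -
  have C: "C > 0" unfolding C_def by (rule root_coeff_bound_pos[OF \<beta>])
  have L: "L > 0" using defect_bound_pos[OF \<beta>] S \<sigma> by (simp add: L_def)
  have thr: "x \<le> 1/2" "x \<le> 1 / (2 * (S + C))" "x \<le> \<sigma> / (2 * C)" "x \<le> \<sigma> / (2 * (C * S))"
    "x \<le> \<sigma> / 16" "x \<le> \<sigma>\<^sup>2 / (32 * defect_bound S \<beta>)" "x \<le> 1 / (8 * S)"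
    using x(2) unfolding scale_threshold_def C_def by simp_all
  have x_sq: "x\<^sup>2 \<le> x" using x thr(1) by (simp add: power2_eq_square mult_left_le)
  show "x \<le> 1/2" "x \<le> \<sigma> / 16" "x \<le> 1 / (8 * S)" using thr by simp_all
  show "(S + C) * x \<le> 1/2" using thr(2) C S by (simp add: field_simps)
  show "C * x \<le> \<sigma> / 2" using thr(3) C by (simp add: field_simps)
  have "C * S * x \<le> \<sigma> / 2" using thr(4) C S by (simp add: field_simps)
  moreover have "C * S * x\<^sup>2 \<le> C * S * x" using C S x_sq by (intro mult_left_mono) auto
  ultimately show "C * S * x\<^sup>2 \<le> \<sigma> / 2" by linarith
  have "L * x \<le> \<sigma> / 16"
    using thr(6) defect_bound_pos[OF \<beta>] S \<sigma> by (simp add: L_def field_simps power2_eq_square)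
  moreover have "L * x\<^sup>2 \<le> L * x" using L x_sq by (intro mult_left_mono) auto
  ultimately show "L * x\<^sup>2 \<le> \<sigma> / 16" by linarith
  have "\<sigma> * x \<le> 1 * 1" using \<sigma> x thr(1) by (intro mult_mono) auto
  thus "\<sigma> / 4 * x \<le> 1" by simp
qed

text \<open>Fix \<open>z\<close> with \<open>s = \<surd>(-z)\<close>, and let \<open>h\<close> be the sequence of ratios of consecutive Laguerre
  polynomials; all constants below depend only on \<open>\<beta>\<close>, \<open>\<sigma> \<le> Re s\<close> and \<open>|s| \<le> S\<close>.\<close>

locale laguerre_ratio_seq =
  fixes \<beta> \<sigma> S :: real and s :: complex and h :: "nat \<Rightarrow> complex"
  assumes beta_pos: "\<beta> > 0" and sigma_pos: "0 < \<sigma>" and sigma_le_1: "\<sigma> \<le> 1" and S_ge_1: "1 \<le> S"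
    and sigma_le_Re: "\<sigma> \<le> Re s" and norm_s_le: "cmod s \<le> S"
    and half_plane: "\<And>m. 1 \<le> m \<Longrightarrow> 0 < Re (cnj s * (h m - 1))"
    and recurrence: "\<And>m. 2 \<le> m \<Longrightarrow> h m = ratio_map s \<beta> m (h (m - 1))"
begin

definition scale :: "nat \<Rightarrow> real" where
  "scale m = 1 / sqrt (real m)"

definition root_plus :: "nat \<Rightarrow> complex" where
  "root_plus m = approx_root s \<beta> (scale m)"

definition root_minus :: "nat \<Rightarrow> complex" where
  "root_minus m = approx_root (-s) \<beta> (scale m)"

definition cross_ratio :: "nat \<Rightarrow> complex" where
  "cross_ratio m = (h m - root_plus m) / (h m - root_minus m)"

abbreviation N0 :: nat where "N0 \<equiv> start_index \<sigma> S \<beta>"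
abbreviation M :: real where "M \<equiv> cross_ratio_const \<sigma> S \<beta>"
abbreviation L :: real where "L \<equiv> 2 * defect_bound S \<beta> / \<sigma>"

lemma S_nonneg: "0 \<le> S"
  using S_ge_1 by simp

lemma sigma_le_norm_s: "\<sigma> \<le> cmod s"
  using sigma_le_Re complex_Re_le_cmod[of s] by linarith

lemma start_index_ge_4: "4 \<le> N0"
  by (simp add: start_index_def)

lemma scale_pos: "1 \<le> m \<Longrightarrow> 0 < scale m"
  by (simp add: scale_def)

lemma scale_sq: "1 \<le> m \<Longrightarrow> (scale m)\<^sup>2 = 1 / real m"
  by (simp add: scale_def power_divide)

lemma scale_antimono: "1 \<le> m \<Longrightarrow> m \<le> n \<Longrightarrow> scale n \<le> scale m"
  by (simp add: scale_def frac_le)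

lemma scale_le_threshold:
  assumes "N0 \<le> m"
  shows "scale m \<le> scale_threshold \<sigma> S \<beta>"
proof -
  define \<epsilon> where "\<epsilon> = scale_threshold \<sigma> S \<beta>"
  have \<epsilon>: "\<epsilon> > 0" unfolding \<epsilon>_def using scale_threshold_pos beta_pos sigma_pos S_ge_1 by blast
  have "1 / \<epsilon>\<^sup>2 \<le> real m"
    using assms of_nat_mono[OF assms] unfolding start_index_def \<epsilon>_def by linarith
  hence "sqrt (1 / \<epsilon>\<^sup>2) \<le> sqrt (real m)" by (rule real_sqrt_le_mono)
  hence "1 / \<epsilon> \<le> sqrt (real m)" using \<epsilon> by (simp add: real_sqrt_divide)
  moreover have "0 < sqrt (real m)" using assms start_index_ge_4 by simp
  ultimately show ?thesis using \<epsilon> by (simp add: scale_def \<epsilon>_def field_simps)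
qed

lemmas scale_conditions = scale_threshold_conditions[OF beta_pos sigma_pos sigma_le_1 S_ge_1
  scale_pos scale_le_threshold]

lemma h_nonzero: "1 \<le> m \<Longrightarrow> h m \<noteq> 0"
  using half_plane[of m] sigma_pos sigma_le_Re by auto

lemma norm_h_sub_root_minus_ge:
  assumes "N0 \<le> m"
  shows "cmod s * scale m / 2 \<le> cmod (h m - root_minus m)"
  unfolding root_minus_def
  using norm_sub_approx_root_uminus_ge[OF half_plane sigma_le_Re sigma_pos norm_s_le beta_pos
      scale_pos scale_conditions(3)] assms start_index_ge_4 by auto

lemma norm_h_sub_root_minus_ge':
  assumes "N0 \<le> m"
  shows "\<sigma> * scale m / 2 \<le> cmod (h m - root_minus m)"
proof -
  have "\<sigma> * scale m \<le> cmod s * scale m"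
    using sigma_le_norm_s scale_pos[of m] assms start_index_ge_4 by (intro mult_right_mono) auto
  thus ?thesis using norm_h_sub_root_minus_ge[OF assms] by linarith
qed

lemma norm_roots_ge:
  assumes "N0 \<le> m"
  shows "1/2 \<le> cmod (root_plus m)" "1/2 \<le> cmod (root_minus m)"
proof -
  have m: "1 \<le> m" using assms start_index_ge_4 by simp
  have t: "0 \<le> scale m" "scale m \<le> 1" using scale_pos[OF m] scale_conditions(1)[OF m assms] by auto
  show "1/2 \<le> cmod (root_plus m)" "1/2 \<le> cmod (root_minus m)"
    unfolding root_plus_def root_minus_def
    using norm_approx_root_bounds(1)[OF t _ beta_pos] norm_s_le scale_conditions(2)[OF m assms]
    by auto
qed

lemma norm_root_minus_le:
  assumes "N0 \<le> m"
  shows "cmod (root_minus m) \<le> (1 - \<sigma> / 4 * scale m) * cmod (root_plus m)"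
proof -
  have m: "1 \<le> m" using assms start_index_ge_4 by simp
  have t: "0 < scale m" "scale m \<le> 1" using scale_pos[OF m] scale_conditions(1)[OF m assms] by auto
  show ?thesis
    unfolding root_plus_def root_minus_def
    using norm_approx_root_uminus_le[OF t norm_s_le beta_pos _ _ sigma_le_Re sigma_pos sigma_le_1]
      scale_conditions(2,4)[OF m assms] by (simp add: mult_ac)
qed

lemma root_defects:
  assumes "Suc N0 \<le> m"
  shows "cmod (ratio_map s \<beta> m (root_plus (m - 1)) - root_plus m) \<le> defect_bound S \<beta> * scale m ^ 4"
    "cmod (ratio_map s \<beta> m (root_minus (m - 1)) - root_minus m) \<le> defect_bound S \<beta> * scale m ^ 4"
proof -
  have m: "2 \<le> m" "N0 \<le> m - 1" using assms start_index_ge_4 by auto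
  have prev: "scale (m - 1) = 1 / sqrt (real m - 1)" using m by (simp add: scale_def of_nat_diff)
  show "cmod (ratio_map s \<beta> m (root_plus (m - 1)) - root_plus m) \<le> defect_bound S \<beta> * scale m ^ 4"
    using ratio_map_approx_root[OF m(1) norm_s_le beta_pos] norm_roots_ge(1)[OF m(2)]
    unfolding root_plus_def prev by (simp add: scale_def)
  show "cmod (ratio_map s \<beta> m (root_minus (m - 1)) - root_minus m) \<le> defect_bound S \<beta> * scale m ^ 4"
    using ratio_map_approx_root[OF m(1) _ beta_pos, of "-s" S] norm_s_le norm_roots_ge(2)[OF m(2)]
    unfolding root_minus_def prev by (simp add: scale_def)
qed

lemma root_plus_sub_root_minus: "root_plus m - root_minus m = 2 * s * of_real (scale m)"
  by (simp add: root_plus_def root_minus_def approx_root_def)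

lemma norm_cross_ratio_start: "cmod (cross_ratio N0) \<le> M * (scale N0)\<^sup>2"
proof -
  have N: "N0 \<le> N0" "1 \<le> N0" using start_index_ge_4 by auto
  have x: "0 < scale N0" by (rule scale_pos[OF N(2)])
  have v: "cmod s * scale N0 / 2 \<le> cmod (h N0 - root_minus N0)"
    by (rule norm_h_sub_root_minus_ge[OF N(1)])
  have "0 < cmod s" using sigma_le_norm_s sigma_pos by linarith
  hence "0 < cmod s * scale N0 / 2" using x by simp
  hence v_pos: "0 < cmod (h N0 - root_minus N0)" using v by linarith
  have "cmod (root_minus N0 - root_plus N0) = 2 * cmod s * scale N0"
    unfolding norm_minus_commute[of "root_minus N0"] root_plus_sub_root_minus
    using x by (simp add: norm_mult)
  hence "cmod (h N0 - root_plus N0) \<le> cmod (h N0 - root_minus N0) + 2 * cmod s * scale N0"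
    by (intro norm_diff_triangle_le[of _ "root_minus N0"]) auto
  also have "\<dots> \<le> 5 * cmod (h N0 - root_minus N0)" using v by linarith
  finally have "cmod (cross_ratio N0) \<le> 5"
    unfolding cross_ratio_def using v_pos by (simp add: norm_divide divide_le_eq)
  also have "5 = 5 * real N0 * (scale N0)\<^sup>2" using scale_sq[OF N(2)] N by simp
  also have "\<dots> \<le> M * (scale N0)\<^sup>2" by (intro mult_right_mono) (auto simp: cross_ratio_const_def)
  finally show ?thesis .
qed

lemma h_sub_root_plus_Suc:
  assumes n: "N0 \<le> n"
  shows "h (Suc n) - root_plus (Suc n)
           = root_minus n / root_plus n * cross_ratio n * (h (Suc n) - ratio_map s \<beta> (Suc n) (root_minus n))
             + (ratio_map s \<beta> (Suc n) (root_plus n) - root_plus (Suc n))"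
proof -
  have n1: "1 \<le> n" using n start_index_ge_4 by simp
  have "0 < \<sigma> * scale n / 2" using sigma_pos scale_pos[OF n1] by simp
  hence "h n \<noteq> root_minus n" using norm_h_sub_root_minus_ge'[OF n] by auto
  moreover have "root_plus n \<noteq> 0" "root_minus n \<noteq> 0" using norm_roots_ge[OF n] by auto
  ultimately have "ratio_map s \<beta> (Suc n) (h n) - ratio_map s \<beta> (Suc n) (root_plus n)
      = root_minus n / root_plus n * cross_ratio n
        * (ratio_map s \<beta> (Suc n) (h n) - ratio_map s \<beta> (Suc n) (root_minus n))"
    unfolding cross_ratio_def using h_nonzero[OF n1] by (intro ratio_map_cross_ratio) auto
  moreover have "h (Suc n) = ratio_map s \<beta> (Suc n) (h n)" using recurrence[of "Suc n"] n1 by simp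
  ultimately show ?thesis by (simp add: algebra_simps)
qed

text \<open>The ratio map multiplies the cross ratio with respect to the exact images of the approximate
  roots by \<open>root_minus / root_plus\<close>, of modulus at most \<open>1 - \<sigma> t/4\<close>; replacing the exact images
  by the approximate roots costs \<open>O(t\<^sup>3)\<close>, because \<open>|h - root_minus|\<close> is of order \<open>t\<close>.\<close>

lemma norm_cross_ratio_Suc:
  assumes n: "N0 \<le> n"
  defines "x \<equiv> scale (Suc n)"
  shows "cmod (cross_ratio (Suc n))
           \<le> (1 - \<sigma> / 4 * x) * cmod (cross_ratio n) * (1 + L * x ^ 3) + L * x ^ 3"
proof -
  define m where "m = Suc n"
  have m: "Suc N0 \<le> m" "N0 \<le> m" "1 \<le> n" "m - 1 = n" using n start_index_ge_4 by (auto simp: m_def)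
  have x: "0 < x" "x \<le> scale n" using scale_pos[of m] scale_antimono[of n m] m by (auto simp: x_def m_def)
  define k where "k = cmod (root_minus n) / cmod (root_plus n)"
  define t where "t = cmod (cross_ratio n)"
  define v where "v = h m - root_minus m"
  define \<rho>p where "\<rho>p = ratio_map s \<beta> m (root_plus n) - root_plus m"
  define \<rho>m where "\<rho>m = ratio_map s \<beta> m (root_minus n) - root_minus m"
  have "h m - root_plus m = root_minus n / root_plus n * cross_ratio n * (v - \<rho>m) + \<rho>p"
    using h_sub_root_plus_Suc[OF n] by (simp add: m_def v_def \<rho>p_def \<rho>m_def)
  hence "cmod (h m - root_plus m)
      \<le> cmod (root_minus n / root_plus n * cross_ratio n * (v - \<rho>m)) + cmod \<rho>p"
    by (metis norm_triangle_ineq)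
  also have "\<dots> \<le> k * t * (cmod v + cmod \<rho>m) + cmod \<rho>p"
    unfolding norm_mult norm_divide k_def t_def
    by (intro add_right_mono mult_left_mono norm_triangle_ineq4) auto
  finally have num: "cmod (h m - root_plus m) \<le> k * t * (cmod v + cmod \<rho>m) + cmod \<rho>p" .
  have v_ge: "\<sigma> * x / 2 \<le> cmod v" using norm_h_sub_root_minus_ge'[OF m(2)] by (simp add: v_def x_def m_def)
  have "0 < \<sigma> * x / 2" using sigma_pos x by simp
  hence v_pos: "0 < cmod v" using v_ge by linarith
  have rel_defect: "cmod \<rho> / cmod v \<le> L * x ^ 3"
    if "cmod \<rho> \<le> defect_bound S \<beta> * x ^ 4" for \<rho>
  proof -
    have "cmod \<rho> / cmod v \<le> defect_bound S \<beta> * x ^ 4 / (\<sigma> * x / 2)"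
      using that v_ge sigma_pos x defect_bound_pos[OF beta_pos S_nonneg] by (intro frac_le) auto
    also have "\<dots> = L * x ^ 3" using x sigma_pos by (simp add: field_simps eval_nat_numeral)
    finally show ?thesis .
  qed
  have defects: "cmod \<rho>p / cmod v \<le> L * x ^ 3" "cmod \<rho>m / cmod v \<le> L * x ^ 3"
    using rel_defect root_defects[OF m(1)] m(4) by (auto simp: \<rho>p_def \<rho>m_def x_def m_def)
  have "0 < cmod (root_plus n)" using norm_roots_ge(1)[OF n] by linarith
  hence "k \<le> 1 - \<sigma> / 4 * scale n"
    using norm_root_minus_le[OF n] by (simp add: k_def pos_divide_le_eq mult.commute)
  also have "\<dots> \<le> 1 - \<sigma> / 4 * x" using x sigma_pos by (simp add: mult_left_mono)
  finally have k: "k \<le> 1 - \<sigma> / 4 * x" .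
  have "cmod (cross_ratio m) = cmod (h m - root_plus m) / cmod v"
    by (simp add: cross_ratio_def v_def norm_divide)
  also have "\<dots> \<le> (k * t * (cmod v + cmod \<rho>m) + cmod \<rho>p) / cmod v"
    using num v_pos by (simp add: divide_right_mono)
  also have "\<dots> = k * t * (1 + cmod \<rho>m / cmod v) + cmod \<rho>p / cmod v"
    using v_pos by (simp add: field_simps)
  also have "\<dots> \<le> k * t * (1 + L * x ^ 3) + L * x ^ 3"
    using defects by (intro add_mono mult_left_mono) (auto simp: k_def t_def)
  also have "\<dots> \<le> (1 - \<sigma> / 4 * x) * t * (1 + L * x ^ 3) + L * x ^ 3"
    using k x defect_bound_pos[OF beta_pos S_nonneg] sigma_pos
    by (intro add_right_mono mult_right_mono) (auto simp: t_def)
  finally show ?thesis by (simp add: m_def t_def)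
qed

lemma norm_cross_ratio_le:
  assumes "N0 \<le> n"
  shows "cmod (cross_ratio n) \<le> M * (scale n)\<^sup>2"
  using assms
proof (induction n rule: nat_induct_at_least)
  case base
  show ?case by (rule norm_cross_ratio_start)
next
  case (Suc n)
  define x where "x = scale (Suc n)"
  have n: "1 \<le> n" "N0 \<le> Suc n" "1 \<le> Suc n" using Suc.hyps start_index_ge_4 by auto
  have x: "0 < x" using scale_pos[of "Suc n"] by (simp add: x_def)
  note conds = scale_conditions[OF n(3,2), folded x_def]
  have "(scale n)\<^sup>2 * (1 - x\<^sup>2) = x\<^sup>2"
    using n(1) by (simp add: x_def scale_sq field_simps)
  moreover have "x\<^sup>2 \<le> 1" using conds(1) x by (simp add: power_le_one)
  ultimately have prev: "cmod (cross_ratio n) * (1 - x\<^sup>2) \<le> M * x\<^sup>2"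
    using mult_right_mono[OF Suc.IH, of "1 - x\<^sup>2"] by (simp add: mult.assoc)
  have M: "0 \<le> M" "16 * defect_bound S \<beta> / \<sigma>\<^sup>2 \<le> M" by (auto simp: cross_ratio_const_def)
  hence "\<sigma> / 4 * (16 * defect_bound S \<beta> / \<sigma>\<^sup>2) \<le> \<sigma> / 4 * M"
    using sigma_pos by (intro mult_left_mono) auto
  hence L: "2 * L \<le> \<sigma> / 4 * M" using sigma_pos by (simp add: field_simps power2_eq_square)
  have small: "x \<le> \<sigma> / 4 / 4" "L * x\<^sup>2 \<le> \<sigma> / 4 / 4" using conds(5,6) by simp_all
  show ?case
    using contraction_step[OF x conds(1) norm_ge_zero prev conds(8) small _ _ M(1) _
        norm_cross_ratio_Suc[OF Suc.hyps, folded x_def]]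
      L defect_bound_pos[OF beta_pos S_nonneg] sigma_pos
    by (simp add: x_def)
qed

lemma h_near_root_plus:
  assumes n: "final_index \<sigma> S \<beta> \<le> n"
  shows "cmod (h n - root_plus n) \<le> 4 * S * M * scale n ^ 3" "1/4 \<le> cmod (h n)"
proof -
  define X where "X = scale n"
  define u where "u = h n - root_plus n"
  define v where "v = h n - root_minus n"
  have n0: "N0 \<le> n" "1 \<le> n" using n start_index_ge_4 by (auto simp: final_index_def)
  have X: "0 < X" "X\<^sup>2 = 1 / real n" using scale_pos[OF n0(2)] scale_sq[OF n0(2)] by (auto simp: X_def)
  note conds = scale_conditions[OF n0(2,1), folded X_def]
  have y: "cmod (cross_ratio n) \<le> M * X\<^sup>2" using norm_cross_ratio_le[OF n0(1)] by (simp add: X_def)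
  have "2 * M \<le> real n"
    using n of_nat_mono[OF n] unfolding final_index_def by linarith
  hence MX: "M * X\<^sup>2 \<le> 1/2" unfolding X(2) using n0 by (simp add: field_simps)
  have "0 < \<sigma> * X / 2" using sigma_pos X by simp
  hence v0: "v \<noteq> 0" using norm_h_sub_root_minus_ge'[OF n0(1)] by (auto simp: v_def X_def)
  have u_eq: "u = cross_ratio n * v" using v0 by (simp add: cross_ratio_def u_def v_def)
  have "cmod v \<le> cmod u + cmod (root_plus n - root_minus n)"
    using norm_triangle_ineq[of u "root_plus n - root_minus n"] by (simp add: u_def v_def)
  also have "cmod (root_plus n - root_minus n) = 2 * cmod s * X"
    using X by (simp add: root_plus_sub_root_minus norm_mult X_def)
  finally have "cmod u \<le> cmod (cross_ratio n) * (cmod u + 2 * cmod s * X)"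
    unfolding u_eq norm_mult by (intro mult_left_mono) auto
  hence "cmod u * (1 - cmod (cross_ratio n)) \<le> 2 * cmod s * X * cmod (cross_ratio n)"
    by (simp add: algebra_simps)
  moreover have "1/2 \<le> 1 - cmod (cross_ratio n)" using y MX by linarith
  ultimately have "cmod u * (1/2) \<le> 2 * cmod s * X * cmod (cross_ratio n)"
    by (smt (verit) mult_left_mono norm_ge_zero)
  hence "cmod u \<le> 4 * cmod s * X * cmod (cross_ratio n)" by simp
  also have "\<dots> \<le> 4 * S * X * (M * X\<^sup>2)" using norm_s_le X y S_nonneg by (intro mult_mono) auto
  finally show u_le: "cmod (h n - root_plus n) \<le> 4 * S * M * scale n ^ 3"
    by (simp add: u_def X_def power3_eq_cube power2_eq_square mult_ac)
  have "4 * S * M * X ^ 3 = 4 * S * X * (M * X\<^sup>2)" by (simp add: power3_eq_cube power2_eq_square mult_ac)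
  also have "\<dots> \<le> 4 * S * X * (1/2)" using MX S_nonneg X by (intro mult_left_mono) auto
  also have "\<dots> \<le> 1/4" using conds(7) S_ge_1 by (simp add: field_simps)
  finally have "4 * S * M * X ^ 3 \<le> 1/4" .
  moreover have "cmod (root_plus n) \<le> cmod (h n) + cmod (h n - root_plus n)"
    using norm_triangle_sub[of "root_plus n" "h n"] by (simp add: norm_minus_commute)
  ultimately show "1/4 \<le> cmod (h n)" using norm_roots_ge(1)[OF n0(1)] u_le by (simp add: X_def)
qed

lemma ratio_expansion:
  assumes n: "final_index \<sigma> S \<beta> \<le> n"
  defines "X \<equiv> complex_of_real (scale n)"
  shows "cmod (1 - 1 / h n - s * X - (of_real (\<beta>/2 - 1/4) - s\<^sup>2/2) * X\<^sup>2)
           \<le> final_const \<sigma> S \<beta> * scale n ^ 3"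
proof -
  define x where "x = scale n"
  define C where "C = root_coeff_bound S \<beta>"
  define c where "c = root_coeff s \<beta>"
  define c' where "c' = of_real (\<beta>/2 - 1/4) - s\<^sup>2/2"
  have n0: "N0 \<le> n" "1 \<le> n" using n start_index_ge_4 by (auto simp: final_index_def)
  have x: "0 < x" "x \<le> 1" using scale_pos[OF n0(2)] scale_conditions(1)[OF n0(2,1)] by (auto simp: x_def)
  have a_ge: "1/2 \<le> cmod (root_plus n)" by (rule norm_roots_ge(1)[OF n0(1)])
  have h_ge: "1/4 \<le> cmod (h n)" by (rule h_near_root_plus(2)[OF n])
  have cb: "cmod c \<le> C" unfolding c_def C_def by (rule norm_root_coeff_le[OF norm_s_le beta_pos])
  have s2: "cmod (s\<^sup>2) \<le> S\<^sup>2" using norm_s_le by (simp add: norm_power power_mono)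
  have cc': "c' = c - s\<^sup>2" by (simp add: c_def c'_def root_coeff_def field_simps)
  have c'b: "cmod c' \<le> C + S\<^sup>2"
    using norm_triangle_ineq4[of c "s\<^sup>2"] cb s2 unfolding cc' by linarith
  have expand: "1 - 1 / h n - s * X - c' * X\<^sup>2
      = (h n - root_plus n) / (root_plus n * h n) + (- (c + c') * s * X ^ 3 - c * c' * X ^ 4) / root_plus n"
    using a_ge h_ge cc'
    by (intro one_minus_inverse_eq) (auto simp: root_plus_def approx_root_def c_def X_def)
  have t1: "cmod ((h n - root_plus n) / (root_plus n * h n)) \<le> 32 * M * S * x ^ 3"
  proof -
    have "cmod ((h n - root_plus n) / (root_plus n * h n))
        = cmod (h n - root_plus n) / (cmod (root_plus n) * cmod (h n))" by (simp add: norm_divide norm_mult)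
    also have "\<dots> \<le> (4 * S * M * x ^ 3) / ((1/2) * (1/4))"
      using h_near_root_plus(1)[OF n] a_ge h_ge x S_nonneg
        cross_ratio_const_def by (intro frac_le mult_mono) (auto simp: x_def)
    finally show ?thesis by (simp add: mult_ac)
  qed
  have t2: "cmod ((- (c + c') * s * X ^ 3 - c * c' * X ^ 4) / root_plus n)
      \<le> 2 * ((2 * C + S\<^sup>2) * S + C * (C + S\<^sup>2)) * x ^ 3"
    unfolding X_def x_def by (rule norm_expansion_remainder_le[OF x[unfolded x_def] a_ge norm_s_le cb c'b])
  have "cmod (1 - 1 / h n - s * X - c' * X\<^sup>2)
      \<le> 32 * M * S * x ^ 3 + 2 * ((2 * C + S\<^sup>2) * S + C * (C + S\<^sup>2)) * x ^ 3"
    unfolding expand using t1 t2 norm_triangle_ineq order_trans add_mono by (smt (verit))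
  also have "\<dots> = final_const \<sigma> S \<beta> * x ^ 3" by (simp add: final_const_def C_def algebra_simps)
  finally show ?thesis by (simp add: c'_def x_def)
qed

end

section \<open>Uniformity on compact sets\<close>

lemma Re_csqrt_pos:
  assumes "w \<notin> \<real>\<^sub>\<le>\<^sub>0"
  shows "Re (csqrt w) > 0"
proof (rule ccontr)
  assume "\<not> Re (csqrt w) > 0"
  hence "Re (csqrt w) = 0" using Re_csqrt[of w] by linarith
  hence "w = complex_of_real (- (Im (csqrt w))\<^sup>2)"
    by (subst power2_csqrt[symmetric]) (simp add: complex_eq_iff power2_eq_square)
  thus False using assms by (metis complex_nonpos_Reals_iff Im_complex_of_real Re_complex_of_real
      neg_le_0_iff_le zero_le_power2)
qed

lemma compact_slit_plane_csqrt_bounds: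
  assumes "compact K" "K \<subseteq> - {z. Im z = 0 \<and> Re z \<ge> 0}"
  obtains \<sigma> S where "0 < \<sigma>" "\<sigma> \<le> 1" "1 \<le> S"
    "\<And>z. z \<in> K \<Longrightarrow> \<sigma> \<le> Re (csqrt (- z)) \<and> cmod (csqrt (- z)) \<le> S"
proof (cases "K = {}")
  case True
  thus ?thesis using that[of 1 1] by simp
next
  case False
  have slit: "- z \<notin> \<real>\<^sub>\<le>\<^sub>0" if "z \<in> K" for z
    using assms(2) that by (auto simp: complex_nonpos_Reals_iff)
  have "continuous_on K (\<lambda>z. csqrt (- z))"
    by (rule continuous_on_compose2[OF continuous_on_csqrt]) (use slit in \<open>auto intro!: continuous_intros\<close>)
  hence "continuous_on K (\<lambda>z. Re (csqrt (- z)))" by (intro continuous_intros)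
  then obtain z0 where z0: "z0 \<in> K" "\<And>z. z \<in> K \<Longrightarrow> Re (csqrt (- z0)) \<le> Re (csqrt (- z))"
    using continuous_attains_inf[OF assms(1) False] by blast
  obtain B where B: "\<And>z. z \<in> K \<Longrightarrow> cmod z \<le> B"
    using compact_imp_bounded[OF assms(1)] by (auto simp: bounded_iff)
  show ?thesis
  proof (rule that[of "min (Re (csqrt (- z0))) 1" "max 1 (sqrt B)"])
    show "0 < min (Re (csqrt (- z0))) 1" using Re_csqrt_pos[OF slit[OF z0(1)]] by simp
    fix z assume "z \<in> K"
    thus "min (Re (csqrt (- z0))) 1 \<le> Re (csqrt (- z)) \<and> cmod (csqrt (- z)) \<le> max 1 (sqrt B)"
      using z0(2) B by (auto simp: min.coboundedI1 le_max_iff_disj)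
  qed simp_all
qed

lemma laguerre_ratio_seq_laguerre_sum:
  assumes \<beta>: "\<beta> > 0" and \<sigma>: "0 < \<sigma>" "\<sigma> \<le> 1" and S: "1 \<le> S"
    and z: "\<sigma> \<le> Re (csqrt (- z))" "cmod (csqrt (- z)) \<le> S"
  defines "p \<equiv> \<lambda>m. laguerre_sum (of_real \<beta>) m z"
  shows "laguerre_ratio_seq \<beta> \<sigma> S (csqrt (- z)) (\<lambda>m. p m / p (m - 1))"
proof
  define s where "s = csqrt (- z)"
  have s: "Re s > 0" "s\<^sup>2 = - z" using z(1) \<sigma>(1) unfolding s_def by (linarith, simp)
  note ratios = laguerre_sum_ratio_half_plane[OF s \<beta>, folded p_def]
  show "0 < Re (cnj (csqrt (- z)) * (p m / p (m - 1) - 1))" if m: "1 \<le> m" for m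
  proof -
    obtain j where "m = Suc j" using m by (cases m) auto
    thus ?thesis using ratios[of j] by (simp only: p_def s_def diff_Suc_1)
  qed
  show "p m / p (m - 1) = ratio_map (csqrt (- z)) \<beta> m (p (m - 1) / p (m - 1 - 1))" if "2 \<le> m" for m
  proof -
    obtain k where k: "m = Suc (Suc k)" using \<open>2 \<le> m\<close> by (metis add_2_eq_Suc le_Suc_ex)
    have nz: "p k \<noteq> 0" "p (Suc k) \<noteq> 0" using ratios[of k] by (auto simp: p_def)
    have three_term: "of_nat (Suc (Suc k)) * p (Suc (Suc k))
        = (2 * of_nat k + 3 + of_real \<beta> - z) * p (Suc k) - (of_nat k + 1 + of_real \<beta>) * p k"
      unfolding p_def by (rule laguerre_sum_three_term)
    have "ratio_map (csqrt (- z)) \<beta> m (p (m - 1) / p (m - 1 - 1))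
        = ((2 * of_nat k + 3 + of_real \<beta> - z) - (of_nat k + 1 + of_real \<beta>) / (p (Suc k) / p k))
          / of_nat (Suc (Suc k))"
      unfolding ratio_map_def k by (simp add: algebra_simps)
    also have "(2 * of_nat k + 3 + of_real \<beta> - z) - (of_nat k + 1 + of_real \<beta>) / (p (Suc k) / p k)
        = of_nat (Suc (Suc k)) * p (Suc (Suc k)) / p (Suc k)"
      unfolding three_term using nz by (simp add: field_simps)
    finally show ?thesis by (simp add: k del: of_nat_Suc)
  qed
qed (use assms in auto)

lemma laguerre_ratio_eq:
  assumes "\<alpha> > -1" "n = Suc k" "laguerre_sum (of_real (\<alpha> + 1)) n z \<noteq> 0"
  shows "laguerre n \<alpha> z / laguerre n (\<alpha> + 1) z
           = 1 - laguerre_sum (of_real (\<alpha> + 1)) k z / laguerre_sum (of_real (\<alpha> + 1)) n z"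
proof -
  have "laguerre n \<alpha> z = laguerre_sum (of_real \<alpha> + 1) n z - laguerre_sum (of_real \<alpha> + 1) k z"
    using laguerre_eq_laguerre_sum[OF assms(1)] laguerre_sum_contiguous[of "of_real \<alpha>" k z] assms(2)
    by simp
  moreover have "laguerre n (\<alpha> + 1) z = laguerre_sum (of_real (\<alpha> + 1)) n z"
    using laguerre_eq_laguerre_sum assms(1) by simp
  ultimately show ?thesis using assms(3) by (simp add: diff_divide_distrib)
qed

lemma csqrt_divide_of_nat:
  assumes "Re s > 0" "s\<^sup>2 = w" "n > 0"
  shows "csqrt (w / of_nat n) = s * of_real (1 / sqrt (real n))"
  by (rule csqrt_unique) (use assms in \<open>simp_all add: power_mult_distrib power_divide flip: of_real_power\<close>)

lemma inverse_sqrt_cube_eq_powr: "n > 0 \<Longrightarrow> (1 / sqrt (real n)) ^ 3 = real n powr (-3/2)"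
  by (simp add: powr_half_sqrt[symmetric] powr_minus_divide powr_realpow[symmetric] powr_powr
      power_divide flip: powr_minus)

lemma laguerre_ratio_estimate:
  assumes \<alpha>: "\<alpha> > -1" and \<sigma>: "0 < \<sigma>" "\<sigma> \<le> 1" and S: "1 \<le> S"
    and z: "\<sigma> \<le> Re (csqrt (- z))" "cmod (csqrt (- z)) \<le> S"
    and n: "final_index \<sigma> S (\<alpha> + 1) \<le> n"
  shows "cmod (laguerre n \<alpha> z / laguerre n (\<alpha> + 1) z - csqrt (- z / of_nat n)
               - (complex_of_real (\<alpha> / 2 + 1 / 4) + z / 2) / of_nat n)
           \<le> final_const \<sigma> S (\<alpha> + 1) * real n powr (- 3 / 2)"
proof -
  define \<beta> where "\<beta> = \<alpha> + 1"
  define p where "p m = laguerre_sum (of_real \<beta>) m z" for m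
  have \<beta>: "\<beta> > 0" using \<alpha> by (simp add: \<beta>_def)
  interpret laguerre_ratio_seq \<beta> \<sigma> S "csqrt (- z)" "\<lambda>m. p m / p (m - 1)"
    unfolding p_def by (rule laguerre_ratio_seq_laguerre_sum[OF \<beta> \<sigma> S z])
  obtain k where k: "n = Suc k" using n by (cases n) (auto simp: final_index_def)
  have "p n \<noteq> 0" using h_nonzero[of n] k by auto
  hence "laguerre n \<alpha> z / laguerre n (\<alpha> + 1) z = 1 - 1 / (p n / p (n - 1))"
    using laguerre_ratio_eq[OF \<alpha> k] k by (simp add: p_def \<beta>_def)
  moreover have "0 < Re (csqrt (- z))" using z \<sigma> by linarith
  hence "csqrt (- z / of_nat n) = csqrt (- z) * of_real (scale n)"
    unfolding scale_def by (rule csqrt_divide_of_nat) (simp_all add: k)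
  moreover have "(complex_of_real (\<alpha> / 2 + 1 / 4) + z / 2) / of_nat n
      = (of_real (\<beta>/2 - 1/4) - (csqrt (- z))\<^sup>2 / 2) * (of_real (scale n))\<^sup>2"
  proof -
    have X2: "(complex_of_real (scale n))\<^sup>2 = 1 / of_nat n"
      using scale_sq[of n] k by (simp flip: of_real_power)
    have "(of_nat n :: complex) \<noteq> 0" unfolding k by (rule of_nat_neq_0)
    thus ?thesis unfolding X2 by (simp add: \<beta>_def field_simps)
  qed
  moreover have "real n powr (- 3 / 2) = scale n ^ 3"
    unfolding scale_def by (rule inverse_sqrt_cube_eq_powr[symmetric]) (simp add: k)
  ultimately show ?thesis
    using ratio_expansion n by (simp add: \<beta>_def diff_diff_eq)
qed

theorem mainTheorem6:
  fixes \<alpha> :: real and K :: "complex set"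
  assumes "\<alpha> > -1"
    and "compact K"
    and "K \<subseteq> - {z. Im z = 0 \<and> Re z \<ge> 0}"
  shows "\<exists>C N. \<forall>n\<ge>N. \<forall>z\<in>K.
           cmod (laguerre n \<alpha> z / laguerre n (\<alpha> + 1) z
                 - csqrt (- z / of_nat n)
                 - (complex_of_real (\<alpha> / 2 + 1 / 4) + z / 2) / of_nat n)
           \<le> C * real n powr (- 3 / 2)"
proof -
  obtain \<sigma> S where \<sigma>: "0 < \<sigma>" "\<sigma> \<le> 1" and S: "1 \<le> S"
    and K: "\<And>z. z \<in> K \<Longrightarrow> \<sigma> \<le> Re (csqrt (- z)) \<and> cmod (csqrt (- z)) \<le> S"
    using compact_slit_plane_csqrt_bounds[OF assms(2,3)] by blast
  show ?thesis
    using laguerre_ratio_estimate[OF assms(1) \<sigma> S] K by blast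
qed

end
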